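(* Let $X_1,X_2,\ldots$ be i.i.d. with mean $0$ and variance $1$, and let $G_n\in\mathscr G_n$ with $|E(G_n)|\to\infty$. Then for every $\varepsilon>0$, $$\lim_{M\to\infty}\sup_{n\ge1}\Pr\big(|S_{G_n}(\bm X_n)-S_{G_n}(\bm X_{n,M})|>\varepsilon\big)=0.$$
   Context: $\mathscr G_n$: simple undirected graphs on $\{1,\ldots,n\}$ labeled so that degrees satisfy $d_1\ge\cdots\ge d_n$; $A(G_n)=((a_{u,v}))$ adjacency matrix, $E(G_n)$ edge set. $S_{G_n}(\bm x):=\frac{1}{\sqrt{|E(G_n)|}}\sum_{1\le u<v\le n}a_{u,v}x_ux_v$, $\bm X_n=(X_1,\ldots,X_n)^\top$. Truncation: $a_M=\mathbb E[X_1\mathbf 1\{|X_1|\le M\}]$, $b_M=\operatorname{Var}[X_1\mathbf 1\{|X_1|\le M\}]$, and for $M$ large so that $b_M>0$, $X_{u,M}:=b_M^{-1/2}(X_u\mathbf 1\{|X_u|\le M\}-a_M)$, $\bm X_{n,M}=(X_{1,M},\ldots,X_{n,M})^\top$. *)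

theory Defs
  imports "HOL-Probability.Probability"
begin

definition simple_graph_on :: "nat \<Rightarrow> (nat \<Rightarrow> nat \<Rightarrow> bool) \<Rightarrow> bool" where
  "simple_graph_on n A \<longleftrightarrow>
     (\<forall>u v. A u v \<longrightarrow> u \<in> {1..n} \<and> v \<in> {1..n}) \<and>
     (\<forall>u v. A u v \<longleftrightarrow> A v u) \<and> (\<forall>u. \<not> A u u)"

definition degree :: "nat \<Rightarrow> (nat \<Rightarrow> nat \<Rightarrow> bool) \<Rightarrow> nat \<Rightarrow> nat" where
  "degree n A u = card {v \<in> {1..n}. A u v}"

definition graph_class :: "nat \<Rightarrow> (nat \<Rightarrow> nat \<Rightarrow> bool) \<Rightarrow> bool" where
  "graph_class n A \<longleftrightarrow> simple_graph_on n A \<and>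
     (\<forall>u v. 1 \<le> u \<and> u \<le> v \<and> v \<le> n \<longrightarrow> degree n A v \<le> degree n A u)"

definition num_edges :: "nat \<Rightarrow> (nat \<Rightarrow> nat \<Rightarrow> bool) \<Rightarrow> nat" where
  "num_edges n A = card {(u, v). 1 \<le> u \<and> u < v \<and> v \<le> n \<and> A u v}"

definition S_graph :: "nat \<Rightarrow> (nat \<Rightarrow> nat \<Rightarrow> bool) \<Rightarrow> (nat \<Rightarrow> real) \<Rightarrow> real" where
  "S_graph n A x = (1 / sqrt (real (num_edges n A))) *
     (\<Sum>u\<in>{1..n}. \<Sum>v\<in>{u<..n}. (if A u v then 1 else 0) * x u * x v)"

definition trunc_mean :: "'a measure \<Rightarrow> (nat \<Rightarrow> 'a \<Rightarrow> real) \<Rightarrow> real \<Rightarrow> real" where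
  "trunc_mean M X K = prob_space.expectation M (\<lambda>\<omega>. X 1 \<omega> * indicator {\<omega>. \<bar>X 1 \<omega>\<bar> \<le> K} \<omega>)"

definition trunc_var :: "'a measure \<Rightarrow> (nat \<Rightarrow> 'a \<Rightarrow> real) \<Rightarrow> real \<Rightarrow> real" where
  "trunc_var M X K = prob_space.variance M (\<lambda>\<omega>. X 1 \<omega> * indicator {\<omega>. \<bar>X 1 \<omega>\<bar> \<le> K} \<omega>)"

definition trunc_X :: "'a measure \<Rightarrow> (nat \<Rightarrow> 'a \<Rightarrow> real) \<Rightarrow> real \<Rightarrow> nat \<Rightarrow> 'a \<Rightarrow> real" where
  "trunc_X M X K u \<omega> =
     (X u \<omega> * indicator {\<omega>. \<bar>X u \<omega>\<bar> \<le> K} \<omega> - trunc_mean M X K) / sqrt (trunc_var M X K)"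

end

theory Submission
  imports Defs
begin

(*
  Write Z_u for the standardised truncation of X_u and Y_u = X_u - Z_u.  Then
  X_u X_v - Z_u Z_v = Y_u X_v + Z_u Y_v, and each of the two edge sums is a sum of
  products of independent centred factors, so distinct edges are orthogonal and its
  second moment is |E(G_n)| E[Y_1^2] (using E[X_1^2] = E[Z_1^2] = 1).  Chebyshev's
  inequality gives P(|S_G(X) - S_G(Z)| > eps) <= 4 E[Y_1^2] / eps^2 for every graph.
*)

definition edge_set :: "nat \<Rightarrow> (nat \<Rightarrow> nat \<Rightarrow> bool) \<Rightarrow> (nat \<times> nat) set" where
  "edge_set n A = {(u, v). 1 \<le> u \<and> u < v \<and> v \<le> n \<and> A u v}"

lemma finite_edge_set: "finite (edge_set n A)"
  unfolding edge_set_def by (rule finite_subset[of _ "{1..n} \<times> {1..n}"]) auto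

lemma edge_set_fst_less_snd: "p \<in> edge_set n A \<Longrightarrow> fst p < snd p"
  by (auto simp: edge_set_def)

lemma num_edges_eq_card_edge_set: "num_edges n A = card (edge_set n A)"
  by (simp add: num_edges_def edge_set_def)

lemma S_graph_eq_edge_sum:
  "S_graph n A x = (\<Sum>p\<in>edge_set n A. x (fst p) * x (snd p)) / sqrt (num_edges n A)"
proof -
  have "(\<Sum>u\<in>{1..n}. \<Sum>v\<in>{u<..n}. (if A u v then 1 else 0) * x u * x v) =
      (\<Sum>p\<in>(SIGMA u:{1..n}. {u<..n}). if A (fst p) (snd p) then x (fst p) * x (snd p) else 0)"
    by (subst sum.Sigma) (auto simp: split_def intro!: sum.cong)
  also have "\<dots> = (\<Sum>p\<in>{p\<in>(SIGMA u:{1..n}. {u<..n}). A (fst p) (snd p)}. x (fst p) * x (snd p))"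
    by (subst sum.inter_filter) auto
  also have "{p\<in>(SIGMA u:{1..n}. {u<..n}). A (fst p) (snd p)} = edge_set n A"
    by (auto simp: edge_set_def)
  finally show ?thesis
    by (simp add: S_graph_def)
qed

lemma S_graph_diff:
  "S_graph n A x - S_graph n A z =
     ((\<Sum>p\<in>edge_set n A. (x (fst p) - z (fst p)) * x (snd p)) +
      (\<Sum>p\<in>edge_set n A. z (fst p) * (x (snd p) - z (snd p)))) / sqrt (num_edges n A)"
  unfolding S_graph_eq_edge_sum diff_divide_distrib[symmetric] sum_subtractf[symmetric]
    sum.distrib[symmetric]
  by (simp add: algebra_simps)

lemma power2_one_add_add_le: "(1 + a + b)\<^sup>2 \<le> 3 * (1 + a\<^sup>2 + (b::real)\<^sup>2)"
proof -
  have "0 \<le> (a - 1)\<^sup>2 + (b - 1)\<^sup>2 + (a - b)\<^sup>2"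
    by simp
  then show ?thesis
    by (simp add: power2_eq_square algebra_simps)
qed

definition edge_factor :: "(real \<Rightarrow> real) \<Rightarrow> (real \<Rightarrow> real) \<Rightarrow> nat \<Rightarrow> nat \<Rightarrow> nat \<Rightarrow> real \<Rightarrow> real" where
  "edge_factor f g u v i x = (if i = u then f x else 1) * (if i = v then g x else 1)"

lemma borel_measurable_edge_factor[measurable]:
  assumes [measurable]: "f \<in> borel_measurable borel" "g \<in> borel_measurable borel"
  shows "edge_factor f g u v i \<in> borel_measurable borel"
  unfolding edge_factor_def[abs_def] by (cases "i = u"; cases "i = v") simp_all

lemma prod_edge_factor:
  assumes "finite D" and "u \<in> D" and "v \<in> D" and "u \<noteq> v"
  shows "(\<Prod>i\<in>D. edge_factor f g u v i (x i)) = f (x u) * g (x v)"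
  using assms by (simp add: edge_factor_def prod.distrib prod.delta)

lemma abs_edge_factor_le: "u \<noteq> v \<Longrightarrow> \<bar>edge_factor f g u v i x\<bar> \<le> 1 + \<bar>f x\<bar> + \<bar>g x\<bar>"
  by (auto simp: edge_factor_def)

locale iid_sequence = prob_space M for M :: "'a measure" +
  fixes X :: "nat \<Rightarrow> 'a \<Rightarrow> real"
  assumes measurable_X[measurable]: "\<And>i. X i \<in> borel_measurable M"
    and indep_X: "indep_vars (\<lambda>_. borel) X UNIV"
    and distr_X: "\<And>i. distr M borel (X i) = distr M borel (X 1)"
begin

lemma integrable_compose_iid:
  fixes \<phi> :: "real \<Rightarrow> real"
  assumes [measurable]: "\<phi> \<in> borel_measurable borel" and "integrable M (\<lambda>\<omega>. \<phi> (X 1 \<omega>))"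
  shows "integrable M (\<lambda>\<omega>. \<phi> (X i \<omega>))"
  using assms integrable_distr_eq[of "X 1" M borel \<phi>] integrable_distr_eq[of "X i" M borel \<phi>]
  by (simp add: distr_X[of i])

lemma integral_compose_iid:
  fixes \<phi> :: "real \<Rightarrow> real"
  assumes [measurable]: "\<phi> \<in> borel_measurable borel"
  shows "(\<integral>\<omega>. \<phi> (X i \<omega>) \<partial>M) = (\<integral>\<omega>. \<phi> (X 1 \<omega>) \<partial>M)"
  using integral_distr[of "X 1" M borel \<phi>] integral_distr[of "X i" M borel \<phi>]
  by (simp add: distr_X[of i])

lemma
  fixes \<psi> :: "nat \<Rightarrow> real \<Rightarrow> real"
  assumes "finite D" and measurable_\<psi>: "\<And>i. i \<in> D \<Longrightarrow> \<psi> i \<in> borel_measurable borel"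
    and "\<And>i. i \<in> D \<Longrightarrow> integrable M (\<lambda>\<omega>. \<psi> i (X 1 \<omega>))"
  shows integrable_prod_iid: "integrable M (\<lambda>\<omega>. \<Prod>i\<in>D. \<psi> i (X i \<omega>))"
    and integral_prod_iid: "(\<integral>\<omega>. (\<Prod>i\<in>D. \<psi> i (X i \<omega>)) \<partial>M) = (\<Prod>i\<in>D. \<integral>\<omega>. \<psi> i (X 1 \<omega>) \<partial>M)"
proof -
  have indep: "indep_vars (\<lambda>_. borel) (\<lambda>i \<omega>. \<psi> i (X i \<omega>)) D"
    by (rule indep_vars_compose2[OF indep_vars_subset[OF indep_X]]) (auto simp: measurable_\<psi>)
  have integrable: "\<And>i. i \<in> D \<Longrightarrow> integrable M (\<lambda>\<omega>. \<psi> i (X i \<omega>))"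
    using assms integrable_compose_iid by blast
  show "integrable M (\<lambda>\<omega>. \<Prod>i\<in>D. \<psi> i (X i \<omega>))"
    by (rule indep_vars_integrable[OF \<open>finite D\<close> indep integrable])
  have "(\<integral>\<omega>. (\<Prod>i\<in>D. \<psi> i (X i \<omega>)) \<partial>M) = (\<Prod>i\<in>D. \<integral>\<omega>. \<psi> i (X i \<omega>) \<partial>M)"
    by (rule indep_vars_lebesgue_integral[OF \<open>finite D\<close> indep integrable])
  also have "\<dots> = (\<Prod>i\<in>D. \<integral>\<omega>. \<psi> i (X 1 \<omega>) \<partial>M)"
    by (intro prod.cong refl integral_compose_iid measurable_\<psi>)
  finally show "(\<integral>\<omega>. (\<Prod>i\<in>D. \<psi> i (X i \<omega>)) \<partial>M) = (\<Prod>i\<in>D. \<integral>\<omega>. \<psi> i (X 1 \<omega>) \<partial>M)" .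
qed

context
  fixes f g :: "real \<Rightarrow> real"
  assumes measurable_f[measurable]: "f \<in> borel_measurable borel"
    and measurable_g[measurable]: "g \<in> borel_measurable borel"
    and integrable_f2: "integrable M (\<lambda>\<omega>. (f (X 1 \<omega>))\<^sup>2)"
    and integrable_g2: "integrable M (\<lambda>\<omega>. (g (X 1 \<omega>))\<^sup>2)"
    and integral_f: "(\<integral>\<omega>. f (X 1 \<omega>) \<partial>M) = 0"
    and integral_g: "(\<integral>\<omega>. g (X 1 \<omega>) \<partial>M) = 0"
begin

lemma integrable_edge_factor_product:
  assumes "u \<noteq> v" and "u' \<noteq> v'"
  shows "integrable M (\<lambda>\<omega>. edge_factor f g u v i (X 1 \<omega>) * edge_factor f g u' v' i (X 1 \<omega>))"
proof (rule Bochner_Integration.integrable_bound)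
  show "integrable M (\<lambda>\<omega>. 3 * (1 + (f (X 1 \<omega>))\<^sup>2 + (g (X 1 \<omega>))\<^sup>2))"
    using integrable_f2 integrable_g2 by auto
  have "\<bar>edge_factor f g u v i x * edge_factor f g u' v' i x\<bar> \<le> (1 + \<bar>f x\<bar> + \<bar>g x\<bar>) * (1 + \<bar>f x\<bar> + \<bar>g x\<bar>)" for x
    unfolding abs_mult by (intro mult_mono abs_edge_factor_le assms) auto
  also have "\<dots> x \<le> 3 * (1 + (f x)\<^sup>2 + (g x)\<^sup>2)" for x
    using power2_one_add_add_le[of "\<bar>f x\<bar>" "\<bar>g x\<bar>"] by (simp add: power2_eq_square)
  finally show "AE \<omega> in M. norm (edge_factor f g u v i (X 1 \<omega>) * edge_factor f g u' v' i (X 1 \<omega>))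
      \<le> norm (3 * (1 + (f (X 1 \<omega>))\<^sup>2 + (g (X 1 \<omega>))\<^sup>2))"
    by (auto intro!: AE_I2 order.trans[OF _ abs_ge_self])
qed simp

lemma prod_integral_edge_factor_product:
  assumes "u < v" and "u' < v'"
  shows "(\<Prod>i\<in>{u, v, u', v'}. \<integral>\<omega>. edge_factor f g u v i (X 1 \<omega>) * edge_factor f g u' v' i (X 1 \<omega>) \<partial>M) =
    (if (u, v) = (u', v') then (\<integral>\<omega>. (f (X 1 \<omega>))\<^sup>2 \<partial>M) * (\<integral>\<omega>. (g (X 1 \<omega>))\<^sup>2 \<partial>M) else 0)"
proof -
  define I where "I i = (\<integral>\<omega>. edge_factor f g u v i (X 1 \<omega>) * edge_factor f g u' v' i (X 1 \<omega>) \<partial>M)" for i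
  have "(\<Prod>i\<in>{u, v, u', v'}. I i) =
      (if (u, v) = (u', v') then (\<integral>\<omega>. (f (X 1 \<omega>))\<^sup>2 \<partial>M) * (\<integral>\<omega>. (g (X 1 \<omega>))\<^sup>2 \<partial>M) else 0)"
  proof (cases "(u, v) = (u', v')")
    case True
    then have "{u, v, u', v'} = {u, v}"
      and "I u = (\<integral>\<omega>. (f (X 1 \<omega>))\<^sup>2 \<partial>M)" and "I v = (\<integral>\<omega>. (g (X 1 \<omega>))\<^sup>2 \<partial>M)"
      using assms by (auto simp: I_def edge_factor_def power2_eq_square)
    then show ?thesis
      using True assms by simp
  next
    case False
    \<comment> \<open>some index occurs in only one factor, and that factor is centred\<close>
    have "\<exists>i\<in>{u, v, u', v'}. I i = 0"
    proof (cases "u \<in> {u', v'}")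
      case False
      then show ?thesis
        using assms integral_f by (auto simp: I_def edge_factor_def)
    next
      case True
      then have "v \<notin> {u, u', v'}"
        using assms \<open>(u, v) \<noteq> (u', v')\<close> by auto
      then show ?thesis
        using assms integral_g by (auto simp: I_def edge_factor_def)
    qed
    then have "(\<Prod>i\<in>{u, v, u', v'}. I i) = 0"
      by (simp add: prod_zero_iff)
    then show ?thesis
      using False by auto
  qed
  then show ?thesis
    by (simp add: I_def)
qed

lemma
  assumes "u < v" and "u' < v'"
  shows integrable_edge_products:
      "integrable M (\<lambda>\<omega>. f (X u \<omega>) * g (X v \<omega>) * (f (X u' \<omega>) * g (X v' \<omega>)))"
    and integral_edge_products:
      "(\<integral>\<omega>. f (X u \<omega>) * g (X v \<omega>) * (f (X u' \<omega>) * g (X v' \<omega>)) \<partial>M) =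
        (if (u, v) = (u', v') then (\<integral>\<omega>. (f (X 1 \<omega>))\<^sup>2 \<partial>M) * (\<integral>\<omega>. (g (X 1 \<omega>))\<^sup>2 \<partial>M) else 0)"
proof -
  define D where "D = {u, v, u', v'}"
  define \<psi> where "\<psi> i x = edge_factor f g u v i x * edge_factor f g u' v' i x" for i x
  have "finite D"
    by (simp add: D_def)
  have product_eq: "f (X u \<omega>) * g (X v \<omega>) * (f (X u' \<omega>) * g (X v' \<omega>)) = (\<Prod>i\<in>D. \<psi> i (X i \<omega>))" for \<omega>
    unfolding \<psi>_def prod.distrib using assms
    by (subst (1 2) prod_edge_factor[OF \<open>finite D\<close>]) (auto simp: D_def)
  have integrable_\<psi>: "integrable M (\<lambda>\<omega>. \<psi> i (X 1 \<omega>))" for i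
    unfolding \<psi>_def using assms by (intro integrable_edge_factor_product) auto
  show "integrable M (\<lambda>\<omega>. f (X u \<omega>) * g (X v \<omega>) * (f (X u' \<omega>) * g (X v' \<omega>)))"
    unfolding product_eq by (rule integrable_prod_iid[OF \<open>finite D\<close> _ integrable_\<psi>]) (simp add: \<psi>_def)
  have "(\<integral>\<omega>. f (X u \<omega>) * g (X v \<omega>) * (f (X u' \<omega>) * g (X v' \<omega>)) \<partial>M) =
      (\<Prod>i\<in>D. \<integral>\<omega>. \<psi> i (X 1 \<omega>) \<partial>M)"
    unfolding product_eq by (rule integral_prod_iid[OF \<open>finite D\<close> _ integrable_\<psi>]) (simp add: \<psi>_def)
  then show "(\<integral>\<omega>. f (X u \<omega>) * g (X v \<omega>) * (f (X u' \<omega>) * g (X v' \<omega>)) \<partial>M) =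
      (if (u, v) = (u', v') then (\<integral>\<omega>. (f (X 1 \<omega>))\<^sup>2 \<partial>M) * (\<integral>\<omega>. (g (X 1 \<omega>))\<^sup>2 \<partial>M) else 0)"
    unfolding D_def \<psi>_def prod_integral_edge_factor_product[OF assms] .
qed

lemma
  assumes "finite P" and "\<And>p. p \<in> P \<Longrightarrow> fst p < snd p"
  shows integrable_edge_sum_square:
      "integrable M (\<lambda>\<omega>. (\<Sum>p\<in>P. f (X (fst p) \<omega>) * g (X (snd p) \<omega>))\<^sup>2)"
    and integral_edge_sum_square:
      "(\<integral>\<omega>. (\<Sum>p\<in>P. f (X (fst p) \<omega>) * g (X (snd p) \<omega>))\<^sup>2 \<partial>M) =
        card P * (\<integral>\<omega>. (f (X 1 \<omega>))\<^sup>2 \<partial>M) * (\<integral>\<omega>. (g (X 1 \<omega>))\<^sup>2 \<partial>M)"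
proof -
  have square_eq: "(\<Sum>p\<in>P. f (X (fst p) \<omega>) * g (X (snd p) \<omega>))\<^sup>2 =
      (\<Sum>p\<in>P. \<Sum>q\<in>P. f (X (fst p) \<omega>) * g (X (snd p) \<omega>) * (f (X (fst q) \<omega>) * g (X (snd q) \<omega>)))" for \<omega>
    by (simp add: power2_eq_square sum_product)
  show "integrable M (\<lambda>\<omega>. (\<Sum>p\<in>P. f (X (fst p) \<omega>) * g (X (snd p) \<omega>))\<^sup>2)"
    unfolding square_eq by (intro Bochner_Integration.integrable_sum integrable_edge_products assms)
  have "(\<integral>\<omega>. (\<Sum>p\<in>P. f (X (fst p) \<omega>) * g (X (snd p) \<omega>))\<^sup>2 \<partial>M) =
      (\<Sum>p\<in>P. \<Sum>q\<in>P. \<integral>\<omega>. f (X (fst p) \<omega>) * g (X (snd p) \<omega>) * (f (X (fst q) \<omega>) * g (X (snd q) \<omega>)) \<partial>M)"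
    unfolding square_eq by (simp add: integrable_sum integrable_edge_products assms)
  also have "\<dots> = (\<Sum>p\<in>P. \<Sum>q\<in>P. if p = q then (\<integral>\<omega>. (f (X 1 \<omega>))\<^sup>2 \<partial>M) * (\<integral>\<omega>. (g (X 1 \<omega>))\<^sup>2 \<partial>M) else 0)"
    by (intro sum.cong refl, subst integral_edge_products) (auto simp: assms prod_eq_iff)
  also have "\<dots> = card P * (\<integral>\<omega>. (f (X 1 \<omega>))\<^sup>2 \<partial>M) * (\<integral>\<omega>. (g (X 1 \<omega>))\<^sup>2 \<partial>M)"
    using assms(1) by simp
  finally show "(\<integral>\<omega>. (\<Sum>p\<in>P. f (X (fst p) \<omega>) * g (X (snd p) \<omega>))\<^sup>2 \<partial>M) =
      card P * (\<integral>\<omega>. (f (X 1 \<omega>))\<^sup>2 \<partial>M) * (\<integral>\<omega>. (g (X 1 \<omega>))\<^sup>2 \<partial>M)" .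
qed

end

end

definition truncate :: "real \<Rightarrow> real \<Rightarrow> real" where
  "truncate K x = (if \<bar>x\<bar> \<le> K then x else 0)"

lemma borel_measurable_truncate[measurable]: "truncate K \<in> borel_measurable borel"
  unfolding truncate_def[abs_def] by measurable

lemma abs_truncate_le: "\<bar>truncate K x\<bar> \<le> \<bar>x\<bar>"
  and truncate_square_le: "(truncate K x)\<^sup>2 \<le> x\<^sup>2"
  and mult_truncate_self: "x * truncate K x = (truncate K x)\<^sup>2"
  by (auto simp: truncate_def power2_eq_square)

lemma eventually_truncate_eq: "\<forall>\<^sub>F K in at_top. truncate K x = x"
  using eventually_ge_at_top[of "\<bar>x\<bar>"] by eventually_elim (simp add: truncate_def)

lemma mult_indicator_eq_truncate: "f \<omega> * indicator {\<omega>. \<bar>f \<omega>\<bar> \<le> K} \<omega> = truncate K (f \<omega>)"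
  by (simp add: truncate_def indicator_def)

lemma tendsto_integral_dominated_eventually_eq:
  fixes s :: "real \<Rightarrow> 'a \<Rightarrow> real"
  assumes "integrable M f" and "\<And>K. s K \<in> borel_measurable M"
    and "\<And>K \<omega>. \<bar>s K \<omega>\<bar> \<le> \<bar>f \<omega>\<bar>" and "\<And>\<omega>. \<forall>\<^sub>F K in at_top. s K \<omega> = f \<omega>"
  shows "((\<lambda>K. \<integral>\<omega>. s K \<omega> \<partial>M) \<longlongrightarrow> \<integral>\<omega>. f \<omega> \<partial>M) at_top"
proof (rule integral_dominated_convergence_at_top[where w="\<lambda>\<omega>. \<bar>f \<omega>\<bar>"])
  show "AE \<omega> in M. ((\<lambda>K. s K \<omega>) \<longlongrightarrow> f \<omega>) at_top"
    using assms(4) by (auto intro: tendsto_eventually)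
qed (use assms in \<open>auto intro: always_eventually\<close>)

locale standard_iid_sequence = iid_sequence +
  assumes integrable_X1_square: "integrable M (\<lambda>\<omega>. (X 1 \<omega>)\<^sup>2)"
    and integral_X1: "(\<integral>\<omega>. X 1 \<omega> \<partial>M) = 0"
    and integral_X1_square: "(\<integral>\<omega>. (X 1 \<omega>)\<^sup>2 \<partial>M) = 1"
begin

definition trunc_second_moment :: "real \<Rightarrow> real" where
  "trunc_second_moment K = (\<integral>\<omega>. (truncate K (X 1 \<omega>))\<^sup>2 \<partial>M)"

definition trunc_std :: "real \<Rightarrow> real \<Rightarrow> real" where
  "trunc_std K x = (truncate K x - trunc_mean M X K) / sqrt (trunc_var M X K)"

definition trunc_residual :: "real \<Rightarrow> real \<Rightarrow> real" where
  "trunc_residual K x = x - trunc_std K x"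

lemma borel_measurable_trunc_std[measurable]: "trunc_std K \<in> borel_measurable borel"
  unfolding trunc_std_def[abs_def] by measurable

lemma borel_measurable_trunc_residual[measurable]: "trunc_residual K \<in> borel_measurable borel"
  unfolding trunc_residual_def[abs_def] by measurable

lemma integrable_X1: "integrable M (X 1)"
  by (rule square_integrable_imp_integrable[OF measurable_X integrable_X1_square])

lemma integrable_truncate: "integrable M (\<lambda>\<omega>. truncate K (X 1 \<omega>))"
  by (rule Bochner_Integration.integrable_bound[OF integrable_X1]) (auto intro!: AE_I2 abs_truncate_le)

lemma integrable_truncate_square: "integrable M (\<lambda>\<omega>. (truncate K (X 1 \<omega>))\<^sup>2)"
  by (rule Bochner_Integration.integrable_bound[OF integrable_X1_square])
    (auto intro!: AE_I2 truncate_square_le)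

lemma trunc_mean_eq: "trunc_mean M X K = (\<integral>\<omega>. truncate K (X 1 \<omega>) \<partial>M)"
  unfolding trunc_mean_def mult_indicator_eq_truncate ..

lemma trunc_var_eq: "trunc_var M X K = trunc_second_moment K - (trunc_mean M X K)\<^sup>2"
  unfolding trunc_var_def mult_indicator_eq_truncate trunc_mean_eq trunc_second_moment_def
  using variance_eq[OF integrable_truncate integrable_truncate_square] by simp

lemma trunc_X_eq: "trunc_X M X K u \<omega> = trunc_std K (X u \<omega>)"
  unfolding trunc_X_def mult_indicator_eq_truncate trunc_std_def ..

lemma tendsto_trunc_mean: "(trunc_mean M X \<longlongrightarrow> 0) at_top"
  using tendsto_integral_dominated_eventually_eq[OF integrable_X1 _ abs_truncate_le eventually_truncate_eq]
    integral_X1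
  by (simp add: trunc_mean_eq[abs_def])

lemma tendsto_trunc_second_moment: "(trunc_second_moment \<longlongrightarrow> 1) at_top"
proof -
  have "((\<lambda>K. \<integral>\<omega>. (truncate K (X 1 \<omega>))\<^sup>2 \<partial>M) \<longlongrightarrow> \<integral>\<omega>. (X 1 \<omega>)\<^sup>2 \<partial>M) at_top"
  proof (rule tendsto_integral_dominated_eventually_eq[OF integrable_X1_square])
    show "\<forall>\<^sub>F K in at_top. (truncate K (X 1 \<omega>))\<^sup>2 = (X 1 \<omega>)\<^sup>2" for \<omega>
      using eventually_truncate_eq[of "X 1 \<omega>"] by eventually_elim simp
  qed (auto simp: truncate_square_le)
  then show ?thesis
    using integral_X1_square by (simp add: trunc_second_moment_def[abs_def])
qed

lemma tendsto_trunc_var: "(trunc_var M X \<longlongrightarrow> 1) at_top"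
  using tendsto_diff[OF tendsto_trunc_second_moment tendsto_power[OF tendsto_trunc_mean, of 2]]
  by (simp add: trunc_var_eq[abs_def])

lemma eventually_trunc_var_pos: "\<forall>\<^sub>F K in at_top. trunc_var M X K > 0"
  using tendsto_trunc_var by (rule order_tendstoD) simp

context
  fixes K :: real
  assumes trunc_var_pos: "trunc_var M X K > 0"
begin

lemma
  shows integrable_trunc_std_square: "integrable M (\<lambda>\<omega>. (trunc_std K (X 1 \<omega>))\<^sup>2)"
    and integral_trunc_std: "(\<integral>\<omega>. trunc_std K (X 1 \<omega>) \<partial>M) = 0"
    and integral_trunc_std_square: "(\<integral>\<omega>. (trunc_std K (X 1 \<omega>))\<^sup>2 \<partial>M) = 1"
proof -
  define s where "s = sqrt (trunc_var M X K)"
  define c where "c = trunc_mean M X K"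
  have "s > 0" and s2: "s\<^sup>2 = trunc_var M X K"
    using trunc_var_pos by (simp_all add: s_def)
  have std_eq: "trunc_std K x = truncate K x / s - c / s" for x
    by (simp add: trunc_std_def s_def c_def diff_divide_distrib)
  have std_square_eq: "(trunc_std K x)\<^sup>2 = (truncate K x)\<^sup>2 / s\<^sup>2 - 2 * c / s\<^sup>2 * truncate K x + c\<^sup>2 / s\<^sup>2" for x
    unfolding std_eq using \<open>s > 0\<close> by (simp add: power2_eq_square field_simps)
  note integrable = integrable_truncate[of K] integrable_truncate_square[of K]
  show "integrable M (\<lambda>\<omega>. (trunc_std K (X 1 \<omega>))\<^sup>2)"
    unfolding std_square_eq using integrable by auto
  show "(\<integral>\<omega>. trunc_std K (X 1 \<omega>) \<partial>M) = 0"
    unfolding std_eq using integrable by (simp add: c_def trunc_mean_eq prob_space)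
  have "(\<integral>\<omega>. (trunc_std K (X 1 \<omega>))\<^sup>2 \<partial>M) = trunc_second_moment K / s\<^sup>2 - 2 * c / s\<^sup>2 * c + c\<^sup>2 / s\<^sup>2"
    unfolding std_square_eq using integrable
    by (simp add: c_def trunc_mean_eq trunc_second_moment_def prob_space)
  also have "\<dots> = (trunc_second_moment K - c\<^sup>2) / s\<^sup>2"
    by (simp add: diff_divide_distrib add_divide_distrib power2_eq_square)
  also have "\<dots> = 1"
    using trunc_var_pos by (simp add: s2 trunc_var_eq c_def)
  finally show "(\<integral>\<omega>. (trunc_std K (X 1 \<omega>))\<^sup>2 \<partial>M) = 1" .
qed

lemma
  shows integrable_trunc_residual_square: "integrable M (\<lambda>\<omega>. (trunc_residual K (X 1 \<omega>))\<^sup>2)"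
    and integral_trunc_residual: "(\<integral>\<omega>. trunc_residual K (X 1 \<omega>) \<partial>M) = 0"
    and integral_trunc_residual_square:
      "(\<integral>\<omega>. (trunc_residual K (X 1 \<omega>))\<^sup>2 \<partial>M) = 2 - 2 * trunc_second_moment K / sqrt (trunc_var M X K)"
proof -
  define s where "s = sqrt (trunc_var M X K)"
  have "s > 0"
    using trunc_var_pos by (simp add: s_def)
  have residual_square_eq: "(trunc_residual K x)\<^sup>2 =
      x\<^sup>2 - 2 / s * (truncate K x)\<^sup>2 + 2 * trunc_mean M X K / s * x + (trunc_std K x)\<^sup>2" for x
  proof -
    have "(trunc_residual K x)\<^sup>2 = x\<^sup>2 - 2 * (x * trunc_std K x) + (trunc_std K x)\<^sup>2"
      by (simp add: trunc_residual_def power2_eq_square algebra_simps)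
    also have "x * trunc_std K x = (x * truncate K x - trunc_mean M X K * x) / s"
      by (simp add: trunc_std_def s_def algebra_simps)
    finally show ?thesis
      unfolding mult_truncate_self using \<open>s > 0\<close> by (simp add: field_simps)
  qed
  note integrable = integrable_truncate_square[of K] integrable_trunc_std_square
    integrable_X1 integrable_X1_square
  have integrable_std: "integrable M (\<lambda>\<omega>. trunc_std K (X 1 \<omega>))"
    by (rule square_integrable_imp_integrable[OF _ integrable_trunc_std_square]) simp
  show "integrable M (\<lambda>\<omega>. (trunc_residual K (X 1 \<omega>))\<^sup>2)"
    unfolding residual_square_eq using integrable by auto
  show "(\<integral>\<omega>. trunc_residual K (X 1 \<omega>) \<partial>M) = 0"
    unfolding trunc_residual_def
    using integrable_X1 integrable_std integral_X1 integral_trunc_std by simp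
  have "(\<integral>\<omega>. (trunc_residual K (X 1 \<omega>))\<^sup>2 \<partial>M) = 1 - 2 / s * trunc_second_moment K + 0 + 1"
    unfolding residual_square_eq
    using integrable integral_X1 integral_X1_square integral_trunc_std_square
    by (simp add: trunc_second_moment_def)
  then show "(\<integral>\<omega>. (trunc_residual K (X 1 \<omega>))\<^sup>2 \<partial>M) = 2 - 2 * trunc_second_moment K / sqrt (trunc_var M X K)"
    by (simp add: s_def)
qed

lemma
  shows integrable_residual_edge_sum_square:
      "integrable M (\<lambda>\<omega>. (\<Sum>p\<in>edge_set n A. trunc_residual K (X (fst p) \<omega>) * X (snd p) \<omega>)\<^sup>2)"
    and integral_residual_edge_sum_square:
      "(\<integral>\<omega>. (\<Sum>p\<in>edge_set n A. trunc_residual K (X (fst p) \<omega>) * X (snd p) \<omega>)\<^sup>2 \<partial>M) =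
        num_edges n A * (\<integral>\<omega>. (trunc_residual K (X 1 \<omega>))\<^sup>2 \<partial>M)"
proof -
  note edges = finite_edge_set edge_set_fst_less_snd
  note moments = integrable_trunc_residual_square integrable_X1_square integral_trunc_residual
  show "integrable M (\<lambda>\<omega>. (\<Sum>p\<in>edge_set n A. trunc_residual K (X (fst p) \<omega>) * X (snd p) \<omega>)\<^sup>2)"
    by (rule integrable_edge_sum_square[where g="\<lambda>x. x", OF _ _ moments _ edges])
      (use integral_X1 in simp_all)
  have "(\<integral>\<omega>. (\<Sum>p\<in>edge_set n A. trunc_residual K (X (fst p) \<omega>) * X (snd p) \<omega>)\<^sup>2 \<partial>M) =
      card (edge_set n A) * (\<integral>\<omega>. (trunc_residual K (X 1 \<omega>))\<^sup>2 \<partial>M) * (\<integral>\<omega>. (X 1 \<omega>)\<^sup>2 \<partial>M)"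
    by (rule integral_edge_sum_square[where g="\<lambda>x. x", OF _ _ moments _ edges])
      (use integral_X1 in simp_all)
  then show "(\<integral>\<omega>. (\<Sum>p\<in>edge_set n A. trunc_residual K (X (fst p) \<omega>) * X (snd p) \<omega>)\<^sup>2 \<partial>M) =
      num_edges n A * (\<integral>\<omega>. (trunc_residual K (X 1 \<omega>))\<^sup>2 \<partial>M)"
    using integral_X1_square by (simp add: num_edges_eq_card_edge_set)
qed

lemma
  shows integrable_std_residual_edge_sum_square:
      "integrable M (\<lambda>\<omega>. (\<Sum>p\<in>edge_set n A. trunc_std K (X (fst p) \<omega>) * trunc_residual K (X (snd p) \<omega>))\<^sup>2)"
    and integral_std_residual_edge_sum_square:
      "(\<integral>\<omega>. (\<Sum>p\<in>edge_set n A. trunc_std K (X (fst p) \<omega>) * trunc_residual K (X (snd p) \<omega>))\<^sup>2 \<partial>M) =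
        num_edges n A * (\<integral>\<omega>. (trunc_residual K (X 1 \<omega>))\<^sup>2 \<partial>M)"
proof -
  note edges = finite_edge_set edge_set_fst_less_snd
  note moments = integrable_trunc_std_square integrable_trunc_residual_square
    integral_trunc_std integral_trunc_residual
  show "integrable M (\<lambda>\<omega>. (\<Sum>p\<in>edge_set n A. trunc_std K (X (fst p) \<omega>) * trunc_residual K (X (snd p) \<omega>))\<^sup>2)"
    by (rule integrable_edge_sum_square[OF _ _ moments edges]) simp_all
  have "(\<integral>\<omega>. (\<Sum>p\<in>edge_set n A. trunc_std K (X (fst p) \<omega>) * trunc_residual K (X (snd p) \<omega>))\<^sup>2 \<partial>M) =
      card (edge_set n A) * (\<integral>\<omega>. (trunc_std K (X 1 \<omega>))\<^sup>2 \<partial>M) * (\<integral>\<omega>. (trunc_residual K (X 1 \<omega>))\<^sup>2 \<partial>M)"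
    by (rule integral_edge_sum_square[OF _ _ moments edges]) simp_all
  then show "(\<integral>\<omega>. (\<Sum>p\<in>edge_set n A. trunc_std K (X (fst p) \<omega>) * trunc_residual K (X (snd p) \<omega>))\<^sup>2 \<partial>M) =
      num_edges n A * (\<integral>\<omega>. (trunc_residual K (X 1 \<omega>))\<^sup>2 \<partial>M)"
    using integral_trunc_std_square by (simp add: num_edges_eq_card_edge_set)
qed

lemma
  shows integrable_S_graph_trunc_diff_square:
      "integrable M (\<lambda>\<omega>. (S_graph n A (\<lambda>u. X u \<omega>) - S_graph n A (\<lambda>u. trunc_X M X K u \<omega>))\<^sup>2)"
    and integral_S_graph_trunc_diff_square_le:
      "(\<integral>\<omega>. (S_graph n A (\<lambda>u. X u \<omega>) - S_graph n A (\<lambda>u. trunc_X M X K u \<omega>))\<^sup>2 \<partial>M)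
        \<le> 4 * (\<integral>\<omega>. (trunc_residual K (X 1 \<omega>))\<^sup>2 \<partial>M)"
proof -
  define N where "N = real (num_edges n A)"
  define e where "e = (\<integral>\<omega>. (trunc_residual K (X 1 \<omega>))\<^sup>2 \<partial>M)"
  define F where "F \<omega> = (\<Sum>p\<in>edge_set n A. trunc_residual K (X (fst p) \<omega>) * X (snd p) \<omega>)" for \<omega>
  define G where "G \<omega> = (\<Sum>p\<in>edge_set n A. trunc_std K (X (fst p) \<omega>) * trunc_residual K (X (snd p) \<omega>))" for \<omega>
  define D where "D \<omega> = S_graph n A (\<lambda>u. X u \<omega>) - S_graph n A (\<lambda>u. trunc_X M X K u \<omega>)" for \<omega>
  have "N \<ge> 0" and "e \<ge> 0"
    by (simp_all add: N_def e_def)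
  have D_square_le: "(D \<omega>)\<^sup>2 \<le> 2 * ((F \<omega>)\<^sup>2 + (G \<omega>)\<^sup>2) / N" for \<omega>
  proof -
    have "D \<omega> = (F \<omega> + G \<omega>) / sqrt N"
      unfolding D_def S_graph_diff trunc_X_eq F_def G_def N_def trunc_residual_def ..
    moreover have "(F \<omega> + G \<omega>)\<^sup>2 \<le> 2 * ((F \<omega>)\<^sup>2 + (G \<omega>)\<^sup>2)"
      using sum_squares_bound[of "F \<omega>" "G \<omega>"] by (simp add: power2_sum)
    ultimately show ?thesis
      using \<open>N \<ge> 0\<close> by (simp add: power_divide divide_right_mono)
  qed
  have integrable_bound: "integrable M (\<lambda>\<omega>. 2 * ((F \<omega>)\<^sup>2 + (G \<omega>)\<^sup>2) / N)"
    unfolding F_def G_def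
    using integrable_residual_edge_sum_square integrable_std_residual_edge_sum_square by auto
  have [measurable]: "D \<in> borel_measurable M"
    unfolding D_def S_graph_def trunc_X_def by measurable
  have integrable_D: "integrable M (\<lambda>\<omega>. (D \<omega>)\<^sup>2)"
    by (rule Bochner_Integration.integrable_bound[OF integrable_bound])
      (use D_square_le \<open>N \<ge> 0\<close> in auto)
  then show "integrable M (\<lambda>\<omega>. (S_graph n A (\<lambda>u. X u \<omega>) - S_graph n A (\<lambda>u. trunc_X M X K u \<omega>))\<^sup>2)"
    unfolding D_def .
  have "(\<integral>\<omega>. (D \<omega>)\<^sup>2 \<partial>M) \<le> (\<integral>\<omega>. 2 * ((F \<omega>)\<^sup>2 + (G \<omega>)\<^sup>2) / N \<partial>M)"
    by (rule integral_mono[OF integrable_D integrable_bound D_square_le])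
  also have "\<dots> = 2 * (N * e + N * e) / N"
    unfolding F_def G_def N_def e_def
    using integrable_residual_edge_sum_square integral_residual_edge_sum_square
      integrable_std_residual_edge_sum_square integral_std_residual_edge_sum_square
    by simp
  also have "\<dots> \<le> 4 * e"
    using \<open>e \<ge> 0\<close> by (cases "N = 0") auto
  finally show "(\<integral>\<omega>. (S_graph n A (\<lambda>u. X u \<omega>) - S_graph n A (\<lambda>u. trunc_X M X K u \<omega>))\<^sup>2 \<partial>M)
      \<le> 4 * (\<integral>\<omega>. (trunc_residual K (X 1 \<omega>))\<^sup>2 \<partial>M)"
    unfolding D_def e_def .
qed

lemma measure_S_graph_trunc_diff_gt_le:
  assumes "\<epsilon> > 0"
  shows "measure M {\<omega> \<in> space M.
      \<bar>S_graph n A (\<lambda>u. X u \<omega>) - S_graph n A (\<lambda>u. trunc_X M X K u \<omega>)\<bar> > \<epsilon>}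
    \<le> 4 * (\<integral>\<omega>. (trunc_residual K (X 1 \<omega>))\<^sup>2 \<partial>M) / \<epsilon>\<^sup>2"
proof -
  define D where "D \<omega> = S_graph n A (\<lambda>u. X u \<omega>) - S_graph n A (\<lambda>u. trunc_X M X K u \<omega>)" for \<omega>
  have measurable_D[measurable]: "D \<in> borel_measurable M"
    unfolding D_def S_graph_def trunc_X_def by measurable
  have "measure M {\<omega> \<in> space M. \<bar>D \<omega>\<bar> > \<epsilon>} \<le> measure M {\<omega> \<in> space M. \<bar>D \<omega>\<bar> \<ge> \<epsilon>}"
    by (rule finite_measure_mono) auto
  also have "\<dots> \<le> (\<integral>\<omega>. (D \<omega>)\<^sup>2 \<partial>M) / \<epsilon>\<^sup>2"
    by (rule second_moment_method[OF measurable_D]) (use integrable_S_graph_trunc_diff_square \<open>\<epsilon> > 0\<close> in \<open>simp_all add: D_def\<close>)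
  also have "\<dots> \<le> 4 * (\<integral>\<omega>. (trunc_residual K (X 1 \<omega>))\<^sup>2 \<partial>M) / \<epsilon>\<^sup>2"
    using integral_S_graph_trunc_diff_square_le by (simp add: D_def divide_right_mono)
  finally show ?thesis
    unfolding D_def .
qed

end

lemma tendsto_integral_trunc_residual_square:
  "((\<lambda>K. \<integral>\<omega>. (trunc_residual K (X 1 \<omega>))\<^sup>2 \<partial>M) \<longlongrightarrow> 0) at_top"
proof -
  have "((\<lambda>K. 2 - 2 * trunc_second_moment K / sqrt (trunc_var M X K)) \<longlongrightarrow> 2 - 2 * 1 / sqrt 1) at_top"
    by (intro tendsto_intros tendsto_trunc_second_moment tendsto_trunc_var) simp
  moreover have "\<forall>\<^sub>F K in at_top. 2 - 2 * trunc_second_moment K / sqrt (trunc_var M X K) =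
      (\<integral>\<omega>. (trunc_residual K (X 1 \<omega>))\<^sup>2 \<partial>M)"
    using eventually_trunc_var_pos by eventually_elim (rule integral_trunc_residual_square[symmetric])
  ultimately show ?thesis
    by (simp add: tendsto_cong)
qed

end

theorem lemma3p1:
  fixes M :: "'a measure" and X :: "nat \<Rightarrow> 'a \<Rightarrow> real"
    and G :: "nat \<Rightarrow> nat \<Rightarrow> nat \<Rightarrow> bool" and \<epsilon> :: real
  assumes "prob_space M"
    and meas: "\<And>i. X i \<in> borel_measurable M"
    and indep: "prob_space.indep_vars M (\<lambda>_. borel) X UNIV"
    and ident: "\<And>i. distr M borel (X i) = distr M borel (X 1)"
    and int1: "integrable M (X 1)"
    and mean0: "prob_space.expectation M (X 1) = 0"
    and int2: "integrable M (\<lambda>\<omega>. (X 1 \<omega>)\<^sup>2)"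
    and var1: "prob_space.variance M (X 1) = 1"
    and graphs: "\<And>n. graph_class n (G n)"
    and edges: "filterlim (\<lambda>n. num_edges n (G n)) at_top sequentially"
    and eps: "\<epsilon> > 0"
  shows "((\<lambda>K. SUP n\<in>{1..}. measure M {\<omega> \<in> space M.
            \<bar>S_graph n (G n) (\<lambda>u. X u \<omega>) - S_graph n (G n) (\<lambda>u. trunc_X M X K u \<omega>)\<bar> > \<epsilon>})
          \<longlongrightarrow> 0) at_top"
proof -
  interpret prob_space M
    by fact
  have "(\<integral>\<omega>. (X 1 \<omega>)\<^sup>2 \<partial>M) = 1"
    using var1 mean0 by simp
  then interpret standard_iid_sequence M X
    by unfold_locales (use meas indep ident int2 mean0 in simp_all)
  define p where "p K n = measure M {\<omega> \<in> space M.
      \<bar>S_graph n (G n) (\<lambda>u. X u \<omega>) - S_graph n (G n) (\<lambda>u. trunc_X M X K u \<omega>)\<bar> > \<epsilon>}" for K n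
  define bound where "bound K = 4 * (\<integral>\<omega>. (trunc_residual K (X 1 \<omega>))\<^sup>2 \<partial>M) / \<epsilon>\<^sup>2" for K
  have "bdd_above (p K ` {1..})" for K
    by (rule bdd_aboveI2[where M=1]) (simp add: p_def)
  then have "\<forall>\<^sub>F K in at_top. 0 \<le> (SUP n\<in>{1..}. p K n)"
    by (intro always_eventually allI cSUP_upper2[where x=1]) (simp_all add: p_def)
  moreover have "\<forall>\<^sub>F K in at_top. (SUP n\<in>{1..}. p K n) \<le> bound K"
    using eventually_trunc_var_pos
  proof eventually_elim
    case (elim K)
    show ?case
      unfolding p_def bound_def
      using measure_S_graph_trunc_diff_gt_le[OF elim eps] by (intro cSUP_least) auto
  qed
  moreover have "(bound \<longlongrightarrow> 0) at_top"
    unfolding bound_def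
    by (intro tendsto_divide_zero tendsto_mult_right_zero tendsto_integral_trunc_residual_square)
  ultimately show ?thesis
    unfolding p_def by (rule tendsto_sandwich[OF _ _ tendsto_const])
qed

end
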